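(* Let $\sigma$ be an $(\alpha,\beta)$-ReLU activation applied entrywise. For every positive semidefinite $\Sigma\in\mathbb R^{n\times n}$, $\mathbb E_{h\sim N(\mathbf 0_n,\Sigma)}[\mathrm{Dir}(\sigma(h))]\le\frac{\alpha^2+\beta^2}{2}\,\mathbb E_{h\sim N(\mathbf 0_n,\Sigma)}[\mathrm{Dir}(h)].$
   Context: An activation $\sigma:\mathbb R\to\mathbb R$ is $(\alpha,\beta)$-ReLU if $\sigma(x)=\alpha x$ for $x\ge0$ and $\sigma(x)=\beta x$ for $x<0$, where $\alpha,\beta\ge0$ are not both $0$. Let $\mathcal G=(\mathcal V,\mathcal E)$ be a finite undirected graph with $n$ nodes, adjacency matrix $A$, degree matrix $D=\mathrm{diag}(A\mathbf 1_n)$ with degrees $d_i$, $\tilde A=A+I$, $\tilde D=D+I$, $\hat A=\tilde D^{-1/2}\tilde A\tilde D^{-1/2}$, $\hat L=I-\hat A$. For $x\in\mathbb R^n$, $\mathrm{Dir}(x)=x^\top\hat Lx=\sum_{\{i,j\}\in\mathcal E}(x_i/\sqrt{1+d_i}-x_j/\sqrt{1+d_j})^2$. *)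

theory Defs
  imports "HOL-Analysis.Analysis" "HOL-Probability.Probability"
begin

definition relu_ab :: "real \<Rightarrow> real \<Rightarrow> real \<Rightarrow> real" where
  "relu_ab \<alpha> \<beta> x = (if x \<ge> 0 then \<alpha> * x else \<beta> * x)"

definition entrywise :: "(real \<Rightarrow> real) \<Rightarrow> real^'n \<Rightarrow> real^'n" where
  "entrywise \<sigma> x = (\<chi> i. \<sigma> (x $ i))"

definition undirected_graph :: "('n::finite \<Rightarrow> 'n \<Rightarrow> bool) \<Rightarrow> bool" where
  "undirected_graph E \<longleftrightarrow> (\<forall>i j. E i j \<longrightarrow> E j i) \<and> (\<forall>i. \<not> E i i)"

definition degree :: "('n::finite \<Rightarrow> 'n \<Rightarrow> bool) \<Rightarrow> 'n \<Rightarrow> nat" where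
  "degree E i = card {j. E i j}"

text \<open>Dirichlet energy: sum over undirected edges {i,j}; each edge appears twice among
  ordered pairs, hence the factor 1/2.\<close>
definition dirichlet :: "('n::finite \<Rightarrow> 'n \<Rightarrow> bool) \<Rightarrow> real^'n \<Rightarrow> real" where
  "dirichlet E x = (1/2) * (\<Sum>i\<in>UNIV. \<Sum>j\<in>{j. E i j}.
      (x $ i / sqrt (1 + real (degree E i)) - x $ j / sqrt (1 + real (degree E j)))\<^sup>2)"

definition psd :: "real^'n^'n \<Rightarrow> bool" where
  "psd S \<longleftrightarrow> transpose S = S \<and> (\<forall>x. x \<bullet> (S *v x) \<ge> 0)"

definition std_gaussian :: "(real^'n::finite) measure" where
  "std_gaussian = density lborel (\<lambda>x. ennreal (\<Prod>i\<in>UNIV. std_normal_density (x $ i)))"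

text \<open>Centered Gaussian N(0,S): law of A z with z standard Gaussian and A A^T = S
  (this law does not depend on the choice of such A).\<close>
definition gaussian :: "real^'n^'n \<Rightarrow> (real^'n::finite) measure" where
  "gaussian S = distr std_gaussian borel (\<lambda>z. (SOME A :: real^'n^'n. A ** transpose A = S) *v z)"

end

theory Submission
  imports Defs
begin

text \<open>The Gaussian law is invariant under \<open>h \<mapsto> -h\<close>, so
  \<open>E[Dir(\<sigma> h)] = E[Dir(\<sigma> h) + Dir(\<sigma> (-h))] / 2\<close>, and it suffices to bound the symmetrised
  energy pointwise. Edge by edge this is the scalar inequality
  \<open>(\<sigma> u - \<sigma> v)\<^sup>2 + (\<sigma> (-u) - \<sigma> (-v))\<^sup>2 \<le> (\<alpha>\<^sup>2 + \<beta>\<^sup>2) (u - v)\<^sup>2\<close>, which applies to the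
  degree-normalised entries because \<open>\<sigma>\<close> is positively homogeneous. Since
  \<open>\<sigma> h - \<sigma> (-h) = (\<alpha> + \<beta>) h\<close>, the energy of \<open>h\<close> is in turn dominated by the symmetrised
  energy of \<open>\<sigma> h\<close>, so the right-hand side is integrable whenever the left-hand side is.\<close>

lemma relu_ab_eq_parts: "relu_ab a b x = a * max x 0 - b * max (- x) 0"
  by (simp add: relu_ab_def)

lemma relu_ab_divide: "w > 0 \<Longrightarrow> relu_ab a b x / w = relu_ab a b (x / w)"
  by (simp add: relu_ab_def zero_le_divide_iff)

lemma relu_ab_diff_sq_le:
  "(relu_ab a b u - relu_ab a b v)\<^sup>2 + (relu_ab a b (- u) - relu_ab a b (- v))\<^sup>2
     \<le> (a\<^sup>2 + b\<^sup>2) * (u - v)\<^sup>2"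
proof -
  define P N where "P = max u 0 - max v 0" and "N = max (- u) 0 - max (- v) 0"
  have diff: "u - v = P - N"
    by (simp add: P_def N_def max_def)
  have diff_pos: "relu_ab a b u - relu_ab a b v = a * P - b * N"
    and diff_neg: "relu_ab a b (- u) - relu_ab a b (- v) = a * N - b * P"
    by (simp_all add: relu_ab_eq_parts P_def N_def algebra_simps)
  have "(relu_ab a b u - relu_ab a b v)\<^sup>2 + (relu_ab a b (- u) - relu_ab a b (- v))\<^sup>2
      = (a\<^sup>2 + b\<^sup>2) * (u - v)\<^sup>2 + 2 * (a - b)\<^sup>2 * (P * N)"
    unfolding diff diff_pos diff_neg by (simp add: power2_eq_square algebra_simps)
  moreover have "P * N \<le> 0"
    by (simp add: P_def N_def max_def mult_nonneg_nonpos mult_nonpos_nonneg)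
  ultimately show ?thesis
    by (simp add: mult_nonneg_nonpos)
qed

lemma entrywise_relu_ab_diff_uminus:
  "entrywise (relu_ab a b) h - entrywise (relu_ab a b) (- h) = (a + b) *\<^sub>R h"
  by (simp add: vec_eq_iff entrywise_def relu_ab_def algebra_simps)

lemma continuous_on_relu_ab: "continuous_on UNIV (relu_ab a b)"
  unfolding relu_ab_eq_parts[abs_def] by (intro continuous_intros)

lemma continuous_on_entrywise:
  assumes "continuous_on UNIV \<sigma>"
  shows "continuous_on UNIV (entrywise \<sigma> :: real^'n \<Rightarrow> real^'n)"
  unfolding entrywise_def[abs_def]
  by (intro continuous_on_vec_lambda
      continuous_on_compose2[OF assms continuous_on_component[OF continuous_on_id]]) simp

lemma continuous_on_dirichlet: "continuous_on UNIV (dirichlet E)"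
  unfolding dirichlet_def[abs_def] by (intro continuous_intros) auto

lemma dirichlet_nonneg: "dirichlet E x \<ge> 0"
  unfolding dirichlet_def by (intro mult_nonneg_nonneg sum_nonneg) auto

lemma dirichlet_scaleR: "dirichlet E (c *\<^sub>R x) = c\<^sup>2 * dirichlet E x"
  by (simp add: dirichlet_def sum_distrib_left power_mult_distrib
      flip: right_diff_distrib times_divide_eq_right)

lemma dirichlet_diff_le: "dirichlet E (x - y) \<le> 2 * (dirichlet E x + dirichlet E y)"
proof -
  define w where "w i = sqrt (1 + real (degree E i))" for i
  have sq_diff_le: "(p - q)\<^sup>2 \<le> 2 * (p\<^sup>2 + q\<^sup>2)" for p q :: real
    using zero_le_power2[of "p + q"] by (simp add: power2_eq_square algebra_simps)
  have "dirichlet E (x - y) = 1/2 * (\<Sum>i\<in>UNIV. \<Sum>j\<in>{j. E i j}.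
      ((x $ i / w i - x $ j / w j) - (y $ i / w i - y $ j / w j))\<^sup>2)"
    by (simp add: dirichlet_def w_def diff_divide_distrib algebra_simps)
  also have "\<dots> \<le> 1/2 * (\<Sum>i\<in>UNIV. \<Sum>j\<in>{j. E i j}.
      2 * ((x $ i / w i - x $ j / w j)\<^sup>2 + (y $ i / w i - y $ j / w j)\<^sup>2))"
    by (intro mult_left_mono sum_mono sq_diff_le) simp
  also have "\<dots> = 2 * (dirichlet E x + dirichlet E y)"
    by (simp add: dirichlet_def w_def sum.distrib sum_distrib_left algebra_simps)
  finally show ?thesis .
qed

lemma dirichlet_relu_ab_symmetrised_le:
  "dirichlet E (entrywise (relu_ab a b) h) + dirichlet E (entrywise (relu_ab a b) (- h))
     \<le> (a\<^sup>2 + b\<^sup>2) * dirichlet E h"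
proof -
  define w where "w i = sqrt (1 + real (degree E i))" for i
  have "dirichlet E (entrywise (relu_ab a b) h) + dirichlet E (entrywise (relu_ab a b) (- h))
      = 1/2 * (\<Sum>i\<in>UNIV. \<Sum>j\<in>{j. E i j}.
          (relu_ab a b (h $ i / w i) - relu_ab a b (h $ j / w j))\<^sup>2
        + (relu_ab a b (- (h $ i / w i)) - relu_ab a b (- (h $ j / w j)))\<^sup>2)"
    by (simp add: dirichlet_def entrywise_def w_def sum.distrib distrib_left relu_ab_divide)
  also have "\<dots> \<le> 1/2 * (\<Sum>i\<in>UNIV. \<Sum>j\<in>{j. E i j}. (a\<^sup>2 + b\<^sup>2) * (h $ i / w i - h $ j / w j)\<^sup>2)"
    by (intro mult_left_mono sum_mono relu_ab_diff_sq_le) simp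
  also have "\<dots> = (a\<^sup>2 + b\<^sup>2) * dirichlet E h"
    by (simp add: dirichlet_def w_def sum_distrib_left)
  finally show ?thesis .
qed

lemma dirichlet_le_relu_ab_symmetrised:
  "(a + b)\<^sup>2 / 2 * dirichlet E h
     \<le> dirichlet E (entrywise (relu_ab a b) h) + dirichlet E (entrywise (relu_ab a b) (- h))"
  using dirichlet_diff_le[of E "entrywise (relu_ab a b) h" "entrywise (relu_ab a b) (- h)"]
  by (simp add: entrywise_relu_ab_diff_uminus dirichlet_scaleR)

lemma lborel_distr_uminus_euclidean:
  "distr lborel borel uminus = (lborel :: 'a::euclidean_space measure)"
proof -
  have "(lborel :: 'a measure)
      = density (distr lborel borel (\<lambda>x. 0 + (-1::real) *\<^sub>R x)) (\<lambda>_. \<bar>-1::real\<bar> ^ DIM('a))"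
    by (rule lborel_affine) simp
  then show ?thesis
    by (simp add: density_1 one_ennreal_def[symmetric])
qed

lemma std_gaussian_distr_uminus: "distr std_gaussian borel uminus = std_gaussian"
proof -
  let ?\<rho> = "\<lambda>x::real^'a. ennreal (\<Prod>i\<in>UNIV. std_normal_density (x $ i))"
  have [measurable]: "?\<rho> \<in> borel_measurable borel"
    by (intro measurable_compose[OF _ measurable_ennreal] borel_measurable_continuous_onI)
       (simp add: std_normal_density_def, intro continuous_intros, auto)
  have "density (distr lborel borel uminus) ?\<rho> = distr (density lborel (\<lambda>x. ?\<rho> (- x))) borel uminus"
    by (rule density_distr) auto
  moreover have "?\<rho> (- x) = ?\<rho> x" for x
    by (simp add: std_normal_density_def)
  ultimately show ?thesis
    by (simp add: std_gaussian_def lborel_distr_uminus_euclidean)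
qed

lemma distr_linear_distr_uminus:
  fixes f :: "'a::euclidean_space \<Rightarrow> 'b::euclidean_space"
  assumes "linear f" and "sets M = sets borel" and "distr M borel uminus = M"
  shows "distr (distr M borel f) borel uminus = distr M borel f"
proof -
  have [measurable]: "f \<in> borel_measurable borel"
    using assms(1) by (intro borel_measurable_continuous_onI linear_continuous_on)
      (simp add: linear_conv_bounded_linear)
  have "uminus \<circ> f = f \<circ> uminus"
    by (simp add: fun_eq_iff linear_neg[OF assms(1)])
  then have "distr (distr M borel f) borel uminus = distr (distr M borel uminus) borel f"
    by (simp add: distr_distr measurable_cong_sets[OF assms(2) refl])
  then show ?thesis
    using assms(3) by simp
qed

lemma gaussian_distr_uminus: "distr (gaussian S) borel uminus = gaussian S"
  unfolding gaussian_def
  by (intro distr_linear_distr_uminus matrix_vector_mul_linear std_gaussian_distr_uminus)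
     (simp add: std_gaussian_def)

lemma sets_gaussian: "sets (gaussian S) = sets borel"
  by (simp add: gaussian_def)

lemma integral_le_of_symmetric:
  fixes M :: "'a::real_normed_vector measure" and f g :: "'a \<Rightarrow> real"
  assumes symmetric: "distr M borel uminus = M" and sets_M: "sets M = sets borel"
    and [measurable]: "f \<in> borel_measurable borel" "g \<in> borel_measurable borel"
    and f_nonneg: "\<And>h. f h \<ge> 0" and g_nonneg: "\<And>h. g h \<ge> 0"
    and upper: "\<And>h. f h + f (- h) \<le> K * g h" and "K \<ge> 0"
    and lower: "\<And>h. c * g h \<le> f h + f (- h)" and "c > 0"
  shows "integral\<^sup>L M f \<le> K / 2 * integral\<^sup>L M g"
proof (cases "integrable M f")
  case True
  have "uminus \<in> borel_measurable (borel :: 'a measure)"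
    by (intro borel_measurable_continuous_onI continuous_intros)
  then have [measurable]: "f \<in> borel_measurable M" "g \<in> borel_measurable M" "uminus \<in> borel_measurable M"
    by (simp_all add: measurable_cong_sets[OF sets_M refl])
  have integrable_reflect: "integrable M (\<lambda>h. f (- h))"
    and integral_reflect: "integral\<^sup>L M (\<lambda>h. f (- h)) = integral\<^sup>L M f"
    using True integrable_distr_eq[of uminus M borel f] integral_distr[of uminus M borel f]
    by (simp_all add: symmetric)
  with True have integrable_sum: "integrable M (\<lambda>h. f h + f (- h))"
    by simp
  have "integrable M g"
  proof (rule Bochner_Integration.integrable_bound)
    show "integrable M (\<lambda>h. (f h + f (- h)) / c)"
      using integrable_sum by simp
    show "AE h in M. norm (g h) \<le> norm ((f h + f (- h)) / c)"
      using lower g_nonneg f_nonneg \<open>c > 0\<close> by (simp add: pos_le_divide_eq mult.commute)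
  qed simp
  then have "integral\<^sup>L M (\<lambda>h. f h + f (- h)) \<le> integral\<^sup>L M (\<lambda>h. K * g h)"
    using integrable_sum upper by (intro integral_mono) auto
  then show ?thesis
    using True integrable_reflect integral_reflect by simp
next
  case False
  then show ?thesis
    using g_nonneg \<open>K \<ge> 0\<close> by (simp add: not_integrable_integral_eq)
qed

theorem mainTheorem13:
  fixes E :: "'n::finite \<Rightarrow> 'n \<Rightarrow> bool"
    and \<alpha> \<beta> :: real and \<Sigma> :: "real^'n^'n"
  assumes "undirected_graph E"
    and "\<alpha> \<ge> 0" and "\<beta> \<ge> 0" and "\<not> (\<alpha> = 0 \<and> \<beta> = 0)"
    and "psd \<Sigma>"
  shows "(\<integral>h. dirichlet E (entrywise (relu_ab \<alpha> \<beta>) h) \<partial>gaussian \<Sigma>)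
           \<le> (\<alpha>\<^sup>2 + \<beta>\<^sup>2) / 2 * (\<integral>h. dirichlet E h \<partial>gaussian \<Sigma>)"
proof (rule integral_le_of_symmetric[OF gaussian_distr_uminus sets_gaussian])
  show "(\<lambda>h. dirichlet E (entrywise (relu_ab \<alpha> \<beta>) h)) \<in> borel_measurable borel"
    by (intro borel_measurable_continuous_onI continuous_on_compose2[OF continuous_on_dirichlet
        continuous_on_entrywise[OF continuous_on_relu_ab]]) simp
  show "dirichlet E \<in> borel_measurable borel"
    by (rule borel_measurable_continuous_onI[OF continuous_on_dirichlet])
  have "\<alpha> + \<beta> > 0"
    using assms(2-4) by linarith
  then show "(\<alpha> + \<beta>)\<^sup>2 / 2 > 0"
    by simp
qed (use dirichlet_nonneg dirichlet_relu_ab_symmetrised_le dirichlet_le_relu_ab_symmetrised in auto)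

end
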